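(* Let $G$ be a reaction network with one-dimensional stoichiometric subspace and let $c^*$ be a total-constant vector. If for a rate-constant vector $\kappa^*$, $G$ has a positive steady state in $\mathcal P_{c^*}$, then: (1) for every $z\in I$, $\phi(\hat\kappa;x_1)$ is well-defined at $z$; (2) for every $k\in\mathcal H\setminus\{\tau\}$, $Y_k(-B_\tau/A_\tau)>0$ (here $-B_\tau/A_\tau$ is the left endpoint of $I$); (3) $\phi(\hat\kappa;x_1)$ is well-defined at the left endpoint of $I$.
   Context: A reaction network $G$ has species $X_1,\dots,X_s$ and $m$ reactions $\sum_{i}\alpha_{ij}X_i\to\sum_i\beta_{ij}X_i$, $\alpha_{ij},\beta_{ij}\in\mathbb Z_{\ge0}$, $(\alpha_{1j},\dots,\alpha_{sj})\neq(\beta_{1j},\dots,\beta_{sj})$. $\mathcal N$ has entries $\beta_{ij}-\alpha_{ij}$, $S=\mathrm{im}\,\mathcal N$. For $\kappa\in\mathbb R^m_{>0}$, $f(\kappa;x)=\mathcal N(\kappa_1\prod_i x_i^{\alpha_{i1}},\dots,\kappa_m\prod_i x_i^{\alpha_{im}})^\top$. Since $S$ is one-dimensional, species are labelled so that $\beta_{11}-\alpha_{11}\ne0$, and there are $\lambda_j\ne0$ ($\lambda_1=1$) with $\beta_{ij}-\alpha_{ij}=\lambda_j(\beta_{i1}-\alpha_{i1})$. For $c\in\mathbb R^{s-1}$, $\mathcal P_c=\{x\in\mathbb R^s_{\ge0}:(\beta_{i1}-\alpha_{i1})x_1-(\beta_{11}-\alpha_{11})x_i=c_{i-1},\ i=2,\dots,s\}$.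 A positive steady state is $x\in\mathbb R^s_{>0}$ with $f(\kappa;x)=0$. Notation for $c^*$: $A_1=1,B_1=0$, $A_i=\frac{\beta_{i1}-\alpha_{i1}}{\beta_{11}-\alpha_{11}}$, $B_i=-\frac{c^*_{i-1}}{\beta_{11}-\alpha_{11}}$ ($i\ge2$). $[i]=\{k:A_k\ne0,B_k/A_k=B_i/A_i\}$ if $A_i\ne0$, $[i]=\{k:A_k=0\}$ otherwise; species labelled so that $1,\dots,r$ represent the $r$ distinct classes. $\varphi_k=\min_j\sum_{i\in[k]}\alpha_{ij}$, $\gamma_{kj}=\sum_{i\in[k]}\alpha_{ij}-\varphi_k$. $\mathcal J=\{i:A_i\ne0\}$, $\mathcal H=\{k\in\{1,\dots,r\}\cap\mathcal J:\gamma_{k1},\dots,\gamma_{km}\text{ not all equal}\}$. Standing assumption: if for some rate constants $G$ has $N$ positive steady states in $\mathcal P_{c^*}$ with $0<N<\infty$, species are labelled so that $1\in\mathcal H$. $I_i=(-B_i/A_i,+\infty)$ if $A_i>0$, $(0,+\infty)$ if $A_i=0$, $(0,-B_i/A_i)$ if $A_i<0$; $I=\bigcap_{k\in\mathcal H}I_k$; $\tau$ is the index in $\mathcal H$ with $A_\tau>0$ such that $-B_\tau/A_\tau$ is the left endpoint of $I$. $Y_i(x_1)=(A_ix_1+B_i)/|A_i|$ if $i\in\mathcal J$, $1$ otherwise; $\mathcal C_j=\prod_{i\in\mathcal J}|A_i|^{\alpha_{ij}}\prod_{i\notin\mathcal J}B_i^{\alpha_{ij}}$; $P_j(x_1)=\mathcal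 C_j\prod_{k\in\mathcal H}Y_k(x_1)^{\gamma_{kj}}$; $\ell$ is an index $j$ minimizing $\gamma_{\tau j}$; $\hat\kappa=(\kappa_1,\dots,\kappa_{\ell-1},\kappa_{\ell+1},\dots,\kappa_m)$ and $\phi(\hat\kappa;x_1)=-\frac{\sum_{j\neq\ell}\lambda_j\kappa_jP_j(x_1)}{\lambda_\ell P_\ell(x_1)}$; $\phi$ is well-defined at $z$ if $P_\ell(z)\neq0$. *)

theory Defs
  imports Complex_Main
begin

text \<open>Conventions: species are indexed by 1..s, reactions by 1..m.
  alpha i j, beta i j are the reactant / product stoichiometric coefficients of species i
  in reaction j.  Concentration vectors and rate-constant vectors are functions on nat,
  only their values on the index ranges matter.  The total-constant vector c is indexed
  by 1..s-1.\<close>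

definition stoich :: "(nat \<Rightarrow> nat \<Rightarrow> nat) \<Rightarrow> (nat \<Rightarrow> nat \<Rightarrow> nat) \<Rightarrow> nat \<Rightarrow> nat \<Rightarrow> real" where
  "stoich \<alpha> \<beta> i j = real (\<beta> i j) - real (\<alpha> i j)"

definition reaction_network :: "nat \<Rightarrow> nat \<Rightarrow> (nat \<Rightarrow> nat \<Rightarrow> nat) \<Rightarrow> (nat \<Rightarrow> nat \<Rightarrow> nat) \<Rightarrow> bool" where
  "reaction_network s m \<alpha> \<beta> \<longleftrightarrow> 1 \<le> s \<and> 1 \<le> m \<and>
     (\<forall>j\<in>{1..m}. \<exists>i\<in>{1..s}. \<alpha> i j \<noteq> \<beta> i j)"

definition lam :: "(nat \<Rightarrow> nat \<Rightarrow> nat) \<Rightarrow> (nat \<Rightarrow> nat \<Rightarrow> nat) \<Rightarrow> nat \<Rightarrow> real" where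
  "lam \<alpha> \<beta> j = stoich \<alpha> \<beta> 1 j / stoich \<alpha> \<beta> 1 1"

definition one_dim_labelled :: "nat \<Rightarrow> nat \<Rightarrow> (nat \<Rightarrow> nat \<Rightarrow> nat) \<Rightarrow> (nat \<Rightarrow> nat \<Rightarrow> nat) \<Rightarrow> bool" where
  "one_dim_labelled s m \<alpha> \<beta> \<longleftrightarrow> stoich \<alpha> \<beta> 1 1 \<noteq> 0 \<and>
     (\<forall>j\<in>{1..m}. \<exists>lj. lj \<noteq> 0 \<and> (\<forall>i\<in>{1..s}. stoich \<alpha> \<beta> i j = lj * stoich \<alpha> \<beta> i 1))"

definition fvec :: "nat \<Rightarrow> nat \<Rightarrow> (nat \<Rightarrow> nat \<Rightarrow> nat) \<Rightarrow> (nat \<Rightarrow> nat \<Rightarrow> nat) \<Rightarrow> (nat \<Rightarrow> real) \<Rightarrow> (nat \<Rightarrow> real) \<Rightarrow> nat \<Rightarrow> real" where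
  "fvec s m \<alpha> \<beta> \<kappa> x i = (\<Sum>j\<in>{1..m}. stoich \<alpha> \<beta> i j * (\<kappa> j * (\<Prod>i'\<in>{1..s}. x i' ^ \<alpha> i' j)))"

definition pos_steady_state :: "nat \<Rightarrow> nat \<Rightarrow> (nat \<Rightarrow> nat \<Rightarrow> nat) \<Rightarrow> (nat \<Rightarrow> nat \<Rightarrow> nat) \<Rightarrow> (nat \<Rightarrow> real) \<Rightarrow> (nat \<Rightarrow> real) \<Rightarrow> bool" where
  "pos_steady_state s m \<alpha> \<beta> \<kappa> x \<longleftrightarrow> (\<forall>i\<in>{1..s}. 0 < x i) \<and> (\<forall>i\<in>{1..s}. fvec s m \<alpha> \<beta> \<kappa> x i = 0)"

definition in_compat_class :: "nat \<Rightarrow> (nat \<Rightarrow> nat \<Rightarrow> nat) \<Rightarrow> (nat \<Rightarrow> nat \<Rightarrow> nat) \<Rightarrow> (nat \<Rightarrow> real) \<Rightarrow> (nat \<Rightarrow> real) \<Rightarrow> bool" where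
  "in_compat_class s \<alpha> \<beta> c x \<longleftrightarrow> (\<forall>i\<in>{1..s}. 0 \<le> x i) \<and>
     (\<forall>i\<in>{2..s}. stoich \<alpha> \<beta> i 1 * x 1 - stoich \<alpha> \<beta> 1 1 * x i = c (i - 1))"

definition pss_set :: "nat \<Rightarrow> nat \<Rightarrow> (nat \<Rightarrow> nat \<Rightarrow> nat) \<Rightarrow> (nat \<Rightarrow> nat \<Rightarrow> nat) \<Rightarrow> (nat \<Rightarrow> real) \<Rightarrow> (nat \<Rightarrow> real) \<Rightarrow> (nat \<Rightarrow> real) set" where
  "pss_set s m \<alpha> \<beta> \<kappa> c = {x. (\<forall>i. i \<notin> {1..s} \<longrightarrow> x i = 0) \<and> in_compat_class s \<alpha> \<beta> c x \<and>
       pos_steady_state s m \<alpha> \<beta> \<kappa> x}"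

definition Acoef :: "(nat \<Rightarrow> nat \<Rightarrow> nat) \<Rightarrow> (nat \<Rightarrow> nat \<Rightarrow> nat) \<Rightarrow> nat \<Rightarrow> real" where
  "Acoef \<alpha> \<beta> i = (if i = 1 then 1 else stoich \<alpha> \<beta> i 1 / stoich \<alpha> \<beta> 1 1)"

definition Bcoef :: "(nat \<Rightarrow> nat \<Rightarrow> nat) \<Rightarrow> (nat \<Rightarrow> nat \<Rightarrow> nat) \<Rightarrow> (nat \<Rightarrow> real) \<Rightarrow> nat \<Rightarrow> real" where
  "Bcoef \<alpha> \<beta> c i = (if i = 1 then 0 else - c (i - 1) / stoich \<alpha> \<beta> 1 1)"

definition cls :: "nat \<Rightarrow> (nat \<Rightarrow> nat \<Rightarrow> nat) \<Rightarrow> (nat \<Rightarrow> nat \<Rightarrow> nat) \<Rightarrow> (nat \<Rightarrow> real) \<Rightarrow> nat \<Rightarrow> nat set" where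
  "cls s \<alpha> \<beta> c i = (if Acoef \<alpha> \<beta> i \<noteq> 0
     then {k\<in>{1..s}. Acoef \<alpha> \<beta> k \<noteq> 0 \<and> Bcoef \<alpha> \<beta> c k / Acoef \<alpha> \<beta> k = Bcoef \<alpha> \<beta> c i / Acoef \<alpha> \<beta> i}
     else {k\<in>{1..s}. Acoef \<alpha> \<beta> k = 0})"

text \<open>Species 1..r represent the r distinct classes.\<close>
definition classes_labelled :: "nat \<Rightarrow> (nat \<Rightarrow> nat \<Rightarrow> nat) \<Rightarrow> (nat \<Rightarrow> nat \<Rightarrow> nat) \<Rightarrow> (nat \<Rightarrow> real) \<Rightarrow> nat \<Rightarrow> bool" where
  "classes_labelled s \<alpha> \<beta> c r \<longleftrightarrow> 1 \<le> r \<and> r \<le> s \<and>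
     (\<forall>k\<in>{1..r}. \<forall>k'\<in>{1..r}. k \<noteq> k' \<longrightarrow> cls s \<alpha> \<beta> c k \<noteq> cls s \<alpha> \<beta> c k') \<and>
     (\<forall>i\<in>{1..s}. \<exists>k\<in>{1..r}. cls s \<alpha> \<beta> c i = cls s \<alpha> \<beta> c k)"

definition phik :: "nat \<Rightarrow> nat \<Rightarrow> (nat \<Rightarrow> nat \<Rightarrow> nat) \<Rightarrow> (nat \<Rightarrow> nat \<Rightarrow> nat) \<Rightarrow> (nat \<Rightarrow> real) \<Rightarrow> nat \<Rightarrow> nat" where
  "phik s m \<alpha> \<beta> c k = Min ((\<lambda>j. \<Sum>i\<in>cls s \<alpha> \<beta> c k. \<alpha> i j) ` {1..m})"

definition gam :: "nat \<Rightarrow> nat \<Rightarrow> (nat \<Rightarrow> nat \<Rightarrow> nat) \<Rightarrow> (nat \<Rightarrow> nat \<Rightarrow> nat) \<Rightarrow> (nat \<Rightarrow> real) \<Rightarrow> nat \<Rightarrow> nat \<Rightarrow> nat" where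
  "gam s m \<alpha> \<beta> c k j = (\<Sum>i\<in>cls s \<alpha> \<beta> c k. \<alpha> i j) - phik s m \<alpha> \<beta> c k"

definition Jset :: "nat \<Rightarrow> (nat \<Rightarrow> nat \<Rightarrow> nat) \<Rightarrow> (nat \<Rightarrow> nat \<Rightarrow> nat) \<Rightarrow> nat set" where
  "Jset s \<alpha> \<beta> = {i\<in>{1..s}. Acoef \<alpha> \<beta> i \<noteq> 0}"

definition Hset :: "nat \<Rightarrow> nat \<Rightarrow> (nat \<Rightarrow> nat \<Rightarrow> nat) \<Rightarrow> (nat \<Rightarrow> nat \<Rightarrow> nat) \<Rightarrow> (nat \<Rightarrow> real) \<Rightarrow> nat \<Rightarrow> nat set" where
  "Hset s m \<alpha> \<beta> c r = {k\<in>{1..r}. k \<in> Jset s \<alpha> \<beta> \<and>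
      (\<exists>j\<in>{1..m}. \<exists>j'\<in>{1..m}. gam s m \<alpha> \<beta> c k j \<noteq> gam s m \<alpha> \<beta> c k j')}"

definition standing_assumption :: "nat \<Rightarrow> nat \<Rightarrow> (nat \<Rightarrow> nat \<Rightarrow> nat) \<Rightarrow> (nat \<Rightarrow> nat \<Rightarrow> nat) \<Rightarrow> (nat \<Rightarrow> real) \<Rightarrow> nat \<Rightarrow> bool" where
  "standing_assumption s m \<alpha> \<beta> c r \<longleftrightarrow>
     (\<forall>\<kappa>. (\<forall>j\<in>{1..m}. 0 < \<kappa> j) \<longrightarrow> pss_set s m \<alpha> \<beta> \<kappa> c \<noteq> {} \<longrightarrow> finite (pss_set s m \<alpha> \<beta> \<kappa> c)
        \<longrightarrow> 1 \<in> Hset s m \<alpha> \<beta> c r)"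

definition Iint :: "(nat \<Rightarrow> nat \<Rightarrow> nat) \<Rightarrow> (nat \<Rightarrow> nat \<Rightarrow> nat) \<Rightarrow> (nat \<Rightarrow> real) \<Rightarrow> nat \<Rightarrow> real set" where
  "Iint \<alpha> \<beta> c i = (if Acoef \<alpha> \<beta> i > 0 then {- Bcoef \<alpha> \<beta> c i / Acoef \<alpha> \<beta> i <..}
     else if Acoef \<alpha> \<beta> i = 0 then {0<..}
     else {0 <..< - Bcoef \<alpha> \<beta> c i / Acoef \<alpha> \<beta> i})"

definition Iset :: "nat \<Rightarrow> nat \<Rightarrow> (nat \<Rightarrow> nat \<Rightarrow> nat) \<Rightarrow> (nat \<Rightarrow> nat \<Rightarrow> nat) \<Rightarrow> (nat \<Rightarrow> real) \<Rightarrow> nat \<Rightarrow> real set" where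
  "Iset s m \<alpha> \<beta> c r = (\<Inter>k\<in>Hset s m \<alpha> \<beta> c r. Iint \<alpha> \<beta> c k)"

definition is_tau :: "nat \<Rightarrow> nat \<Rightarrow> (nat \<Rightarrow> nat \<Rightarrow> nat) \<Rightarrow> (nat \<Rightarrow> nat \<Rightarrow> nat) \<Rightarrow> (nat \<Rightarrow> real) \<Rightarrow> nat \<Rightarrow> nat \<Rightarrow> bool" where
  "is_tau s m \<alpha> \<beta> c r \<tau> \<longleftrightarrow> \<tau> \<in> Hset s m \<alpha> \<beta> c r \<and> Acoef \<alpha> \<beta> \<tau> > 0 \<and>
     Iset s m \<alpha> \<beta> c r \<noteq> {} \<and> Inf (Iset s m \<alpha> \<beta> c r) = - Bcoef \<alpha> \<beta> c \<tau> / Acoef \<alpha> \<beta> \<tau>"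

definition Ycoord :: "nat \<Rightarrow> (nat \<Rightarrow> nat \<Rightarrow> nat) \<Rightarrow> (nat \<Rightarrow> nat \<Rightarrow> nat) \<Rightarrow> (nat \<Rightarrow> real) \<Rightarrow> nat \<Rightarrow> real \<Rightarrow> real" where
  "Ycoord s \<alpha> \<beta> c i x1 = (if i \<in> Jset s \<alpha> \<beta>
     then (Acoef \<alpha> \<beta> i * x1 + Bcoef \<alpha> \<beta> c i) / \<bar>Acoef \<alpha> \<beta> i\<bar> else 1)"

definition Cconst :: "nat \<Rightarrow> (nat \<Rightarrow> nat \<Rightarrow> nat) \<Rightarrow> (nat \<Rightarrow> nat \<Rightarrow> nat) \<Rightarrow> (nat \<Rightarrow> real) \<Rightarrow> nat \<Rightarrow> real" where
  "Cconst s \<alpha> \<beta> c j = (\<Prod>i\<in>Jset s \<alpha> \<beta>. \<bar>Acoef \<alpha> \<beta> i\<bar> ^ \<alpha> i j) *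
      (\<Prod>i\<in>{1..s} - Jset s \<alpha> \<beta>. Bcoef \<alpha> \<beta> c i ^ \<alpha> i j)"

definition Ppoly :: "nat \<Rightarrow> nat \<Rightarrow> (nat \<Rightarrow> nat \<Rightarrow> nat) \<Rightarrow> (nat \<Rightarrow> nat \<Rightarrow> nat) \<Rightarrow> (nat \<Rightarrow> real) \<Rightarrow> nat \<Rightarrow> nat \<Rightarrow> real \<Rightarrow> real" where
  "Ppoly s m \<alpha> \<beta> c r j x1 = Cconst s \<alpha> \<beta> c j *
      (\<Prod>k\<in>Hset s m \<alpha> \<beta> c r. Ycoord s \<alpha> \<beta> c k x1 ^ gam s m \<alpha> \<beta> c k j)"

definition is_ell :: "nat \<Rightarrow> nat \<Rightarrow> (nat \<Rightarrow> nat \<Rightarrow> nat) \<Rightarrow> (nat \<Rightarrow> nat \<Rightarrow> nat) \<Rightarrow> (nat \<Rightarrow> real) \<Rightarrow> nat \<Rightarrow> nat \<Rightarrow> bool" where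
  "is_ell s m \<alpha> \<beta> c \<tau> ell \<longleftrightarrow> ell \<in> {1..m} \<and> (\<forall>j\<in>{1..m}. gam s m \<alpha> \<beta> c \<tau> ell \<le> gam s m \<alpha> \<beta> c \<tau> j)"

text \<open>phi(kappa-hat; x1); it only involves kappa_j for j \<noteq> ell.\<close>
definition phi_fun :: "nat \<Rightarrow> nat \<Rightarrow> (nat \<Rightarrow> nat \<Rightarrow> nat) \<Rightarrow> (nat \<Rightarrow> nat \<Rightarrow> nat) \<Rightarrow> (nat \<Rightarrow> real) \<Rightarrow> nat \<Rightarrow> nat \<Rightarrow> (nat \<Rightarrow> real) \<Rightarrow> real \<Rightarrow> real" where
  "phi_fun s m \<alpha> \<beta> c r ell \<kappa> x1 =
     - (\<Sum>j\<in>{1..m} - {ell}. lam \<alpha> \<beta> j * \<kappa> j * Ppoly s m \<alpha> \<beta> c r j x1) / (lam \<alpha> \<beta> ell * Ppoly s m \<alpha> \<beta> c r ell x1)"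

definition phi_well_defined :: "nat \<Rightarrow> nat \<Rightarrow> (nat \<Rightarrow> nat \<Rightarrow> nat) \<Rightarrow> (nat \<Rightarrow> nat \<Rightarrow> nat) \<Rightarrow> (nat \<Rightarrow> real) \<Rightarrow> nat \<Rightarrow> nat \<Rightarrow> real \<Rightarrow> bool" where
  "phi_well_defined s m \<alpha> \<beta> c r ell z \<longleftrightarrow> Ppoly s m \<alpha> \<beta> c r ell z \<noteq> 0"

end

theory Submission
  imports Defs
begin

text \<open>On \<open>I\<close> every \<open>Y\<^sub>k\<close> with \<open>k \<in> H\<close> is positive, and every \<open>C\<^sub>j\<close> is nonzero because a species
  with \<open>A\<^sub>i = 0\<close> has the constant concentration \<open>B\<^sub>i\<close> on \<open>P\<^sub>c\<close>, which the given positive steady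
  state shows to be positive. At the left endpoint \<open>L = -B\<^sub>\<tau>/A\<^sub>\<tau>\<close> of \<open>I\<close> only \<open>Y\<^sub>\<tau>\<close> vanishes:
  for \<open>A\<^sub>k > 0\<close> the root \<open>-B\<^sub>k/A\<^sub>k\<close> lies at or left of \<open>L\<close>, and it differs from \<open>L\<close> because \<open>k\<close> and
  \<open>\<tau>\<close> represent different classes; for \<open>A\<^sub>k < 0\<close> the root lies right of \<open>I\<close>. Since \<open>\<gamma>\<^sub>\<tau>\<^sub>\<ell> = 0\<close>,
  the vanishing factor \<open>Y\<^sub>\<tau>\<close> does not occur in \<open>P\<^sub>\<ell>\<close>.\<close>

lemma Bcoef_eq_coord_if_Acoef_eq_0:
  assumes "stoich \<alpha> \<beta> 1 1 \<noteq> 0" "in_compat_class s \<alpha> \<beta> c x"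
    and "i \<in> {1..s}" "Acoef \<alpha> \<beta> i = 0"
  shows "Bcoef \<alpha> \<beta> c i = x i"
proof -
  have "i \<noteq> 1" using assms(4) by (auto simp: Acoef_def)
  with assms have "stoich \<alpha> \<beta> i 1 = 0" and "i \<in> {2..s}"
    by (auto simp: Acoef_def)
  then have "- stoich \<alpha> \<beta> 1 1 * x i = c (i - 1)"
    using assms(2) unfolding in_compat_class_def by fastforce
  with \<open>i \<noteq> 1\<close> assms(1) show ?thesis by (auto simp: Bcoef_def field_simps)
qed

lemma Cconst_nonzero:
  assumes "one_dim_labelled s m \<alpha> \<beta>" "in_compat_class s \<alpha> \<beta> c x"
    and "\<forall>i\<in>{1..s}. 0 < x i"
  shows "Cconst s \<alpha> \<beta> c j \<noteq> 0"
proof -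
  have "stoich \<alpha> \<beta> 1 1 \<noteq> 0" using assms(1) by (simp add: one_dim_labelled_def)
  have "Bcoef \<alpha> \<beta> c i \<noteq> 0" if i: "i \<in> {1..s} - Jset s \<alpha> \<beta>" for i
  proof -
    have "Bcoef \<alpha> \<beta> c i = x i"
      using i by (intro Bcoef_eq_coord_if_Acoef_eq_0[OF \<open>stoich \<alpha> \<beta> 1 1 \<noteq> 0\<close> assms(2)])
        (auto simp: Jset_def)
    with i assms(3) show ?thesis by force
  qed
  then show ?thesis by (auto simp: Cconst_def Jset_def prod_zero_iff)
qed

lemma Ycoord_pos_if_root_on_proper_side:
  assumes "k \<in> Jset s \<alpha> \<beta>"
    and "Acoef \<alpha> \<beta> k > 0 \<Longrightarrow> - Bcoef \<alpha> \<beta> c k / Acoef \<alpha> \<beta> k < z"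
    and "Acoef \<alpha> \<beta> k < 0 \<Longrightarrow> z < - Bcoef \<alpha> \<beta> c k / Acoef \<alpha> \<beta> k"
  shows "Ycoord s \<alpha> \<beta> c k z > 0"
proof -
  have A: "Acoef \<alpha> \<beta> k \<noteq> 0" using assms(1) by (simp add: Jset_def)
  have "Acoef \<alpha> \<beta> k * z + Bcoef \<alpha> \<beta> c k > 0"
  proof (cases "Acoef \<alpha> \<beta> k > 0")
    case True
    with assms(2) show ?thesis by (simp add: field_simps)
  next
    case False
    with A assms(3) show ?thesis by (simp add: field_simps)
  qed
  with A assms(1) show ?thesis by (simp add: Ycoord_def)
qed

lemma Ycoord_pos_if_in_Iint:
  assumes "k \<in> Jset s \<alpha> \<beta>" "z \<in> Iint \<alpha> \<beta> c k"
  shows "Ycoord s \<alpha> \<beta> c k z > 0"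
  using assms(2) by (intro Ycoord_pos_if_root_on_proper_side[OF assms(1)]) (auto simp: Iint_def)

lemma Hset_subset_Jset: "Hset s m \<alpha> \<beta> c r \<subseteq> Jset s \<alpha> \<beta>"
  by (auto simp: Hset_def)

lemma Iset_subset_Iint: "k \<in> Hset s m \<alpha> \<beta> c r \<Longrightarrow> Iset s m \<alpha> \<beta> c r \<subseteq> Iint \<alpha> \<beta> c k"
  by (auto simp: Iset_def)

lemma Ppoly_nonzero:
  assumes "Cconst s \<alpha> \<beta> c j \<noteq> 0"
    and "\<And>k. k \<in> Hset s m \<alpha> \<beta> c r \<Longrightarrow> Ycoord s \<alpha> \<beta> c k z \<noteq> 0 \<or> gam s m \<alpha> \<beta> c k j = 0"
  shows "Ppoly s m \<alpha> \<beta> c r j z \<noteq> 0"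
proof -
  have "finite (Hset s m \<alpha> \<beta> c r)" by (simp add: Hset_def)
  with assms show ?thesis by (auto simp: Ppoly_def prod_zero_iff)
qed

lemma gam_eq_0_if_minimal:
  assumes "1 \<le> m" "\<forall>j\<in>{1..m}. gam s m \<alpha> \<beta> c k ell \<le> gam s m \<alpha> \<beta> c k j"
  shows "gam s m \<alpha> \<beta> c k ell = 0"
proof -
  define g where "g j = (\<Sum>i\<in>cls s \<alpha> \<beta> c k. \<alpha> i j)" for j
  obtain j0 where "j0 \<in> {1..m}" "g j0 = Min (g ` {1..m})"
    using Min_in[of "g ` {1..m}"] assms(1) by fastforce
  then have "gam s m \<alpha> \<beta> c k j0 = 0" by (simp add: gam_def phik_def g_def)
  with assms(2) \<open>j0 \<in> {1..m}\<close> show ?thesis by fastforce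
qed

lemma cls_eq_if_root_eq:
  assumes "Acoef \<alpha> \<beta> k \<noteq> 0" "Acoef \<alpha> \<beta> k' \<noteq> 0"
    and "- Bcoef \<alpha> \<beta> c k / Acoef \<alpha> \<beta> k = - Bcoef \<alpha> \<beta> c k' / Acoef \<alpha> \<beta> k'"
  shows "cls s \<alpha> \<beta> c k = cls s \<alpha> \<beta> c k'"
  using assms by (simp add: cls_def)

lemma root_lt_left_endpoint:
  assumes tau: "is_tau s m \<alpha> \<beta> c r \<tau>" and lab: "classes_labelled s \<alpha> \<beta> c r"
    and k: "k \<in> Hset s m \<alpha> \<beta> c r" "k \<noteq> \<tau>" and A: "Acoef \<alpha> \<beta> k > 0"
  shows "- Bcoef \<alpha> \<beta> c k / Acoef \<alpha> \<beta> k < - Bcoef \<alpha> \<beta> c \<tau> / Acoef \<alpha> \<beta> \<tau>"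
proof -
  let ?I = "Iset s m \<alpha> \<beta> c r"
  have "- Bcoef \<alpha> \<beta> c k / Acoef \<alpha> \<beta> k \<le> z" if "z \<in> ?I" for z
    using that Iset_subset_Iint[OF k(1)] A by (auto simp: Iint_def)
  with tau have "- Bcoef \<alpha> \<beta> c k / Acoef \<alpha> \<beta> k \<le> - Bcoef \<alpha> \<beta> c \<tau> / Acoef \<alpha> \<beta> \<tau>"
    unfolding is_tau_def by (metis cInf_greatest)
  moreover have "- Bcoef \<alpha> \<beta> c k / Acoef \<alpha> \<beta> k \<noteq> - Bcoef \<alpha> \<beta> c \<tau> / Acoef \<alpha> \<beta> \<tau>"
  proof
    assume "- Bcoef \<alpha> \<beta> c k / Acoef \<alpha> \<beta> k = - Bcoef \<alpha> \<beta> c \<tau> / Acoef \<alpha> \<beta> \<tau>"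
    with A tau have "cls s \<alpha> \<beta> c k = cls s \<alpha> \<beta> c \<tau>"
      by (intro cls_eq_if_root_eq) (auto simp: is_tau_def)
    moreover have "k \<in> {1..r}" "\<tau> \<in> {1..r}"
      using k(1) tau by (auto simp: Hset_def is_tau_def)
    ultimately show False using lab k(2) unfolding classes_labelled_def by blast
  qed
  ultimately show ?thesis by simp
qed

lemma left_endpoint_lt_root:
  assumes tau: "is_tau s m \<alpha> \<beta> c r \<tau>"
    and k: "k \<in> Hset s m \<alpha> \<beta> c r" and A: "Acoef \<alpha> \<beta> k < 0"
  shows "- Bcoef \<alpha> \<beta> c \<tau> / Acoef \<alpha> \<beta> \<tau> < - Bcoef \<alpha> \<beta> c k / Acoef \<alpha> \<beta> k"
proof -
  let ?I = "Iset s m \<alpha> \<beta> c r"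
  obtain z where z: "z \<in> ?I" using tau by (auto simp: is_tau_def)
  have "?I \<subseteq> Iint \<alpha> \<beta> c \<tau>" using tau Iset_subset_Iint by (auto simp: is_tau_def)
  with tau have "bdd_below ?I"
    by (auto simp: is_tau_def Iint_def intro!: bdd_belowI[of _ "- Bcoef \<alpha> \<beta> c \<tau> / Acoef \<alpha> \<beta> \<tau>"])
  with z tau have "- Bcoef \<alpha> \<beta> c \<tau> / Acoef \<alpha> \<beta> \<tau> \<le> z"
    unfolding is_tau_def by (metis cInf_lower)
  also have "z < - Bcoef \<alpha> \<beta> c k / Acoef \<alpha> \<beta> k"
    using z Iset_subset_Iint[OF k] A by (auto simp: Iint_def)
  finally show ?thesis .
qed

lemma Ycoord_pos_at_left_endpoint:
  assumes tau: "is_tau s m \<alpha> \<beta> c r \<tau>" and lab: "classes_labelled s \<alpha> \<beta> c r"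
    and k: "k \<in> Hset s m \<alpha> \<beta> c r" "k \<noteq> \<tau>"
  shows "Ycoord s \<alpha> \<beta> c k (- Bcoef \<alpha> \<beta> c \<tau> / Acoef \<alpha> \<beta> \<tau>) > 0"
proof -
  let ?L = "- Bcoef \<alpha> \<beta> c \<tau> / Acoef \<alpha> \<beta> \<tau>"
  have J: "k \<in> Jset s \<alpha> \<beta>" using k(1) Hset_subset_Jset by blast
  show ?thesis
  proof (rule Ycoord_pos_if_root_on_proper_side[OF J])
    show "- Bcoef \<alpha> \<beta> c k / Acoef \<alpha> \<beta> k < ?L" if "Acoef \<alpha> \<beta> k > 0"
      using root_lt_left_endpoint[OF tau lab k that] .
    show "?L < - Bcoef \<alpha> \<beta> c k / Acoef \<alpha> \<beta> k" if "Acoef \<alpha> \<beta> k < 0"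
      using left_endpoint_lt_root[OF tau k(1) that] .
  qed
qed

theorem lemma5p12:
  fixes s m r :: nat and \<alpha> \<beta> :: "nat \<Rightarrow> nat \<Rightarrow> nat"
    and cs \<kappa>s :: "nat \<Rightarrow> real"
  assumes net: "reaction_network s m \<alpha> \<beta>"
    and onedim: "one_dim_labelled s m \<alpha> \<beta>"
    and lab: "classes_labelled s \<alpha> \<beta> cs r"
    and standing: "standing_assumption s m \<alpha> \<beta> cs r"
    and kpos: "\<forall>j\<in>{1..m}. 0 < \<kappa>s j"
    and ss: "\<exists>x. in_compat_class s \<alpha> \<beta> cs x \<and> pos_steady_state s m \<alpha> \<beta> \<kappa>s x"
  shows "\<forall>\<tau>. is_tau s m \<alpha> \<beta> cs r \<tau> \<longrightarrow>
           (\<forall>ell. is_ell s m \<alpha> \<beta> cs \<tau> ell \<longrightarrow>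
               (\<forall>z\<in>Iset s m \<alpha> \<beta> cs r. phi_well_defined s m \<alpha> \<beta> cs r ell z))
         \<and> (\<forall>k\<in>Hset s m \<alpha> \<beta> cs r - {\<tau>}.
               Ycoord s \<alpha> \<beta> cs k (- Bcoef \<alpha> \<beta> cs \<tau> / Acoef \<alpha> \<beta> \<tau>) > 0)
         \<and> (\<forall>ell. is_ell s m \<alpha> \<beta> cs \<tau> ell \<longrightarrow>
               phi_well_defined s m \<alpha> \<beta> cs r ell (- Bcoef \<alpha> \<beta> cs \<tau> / Acoef \<alpha> \<beta> \<tau>))"
proof (intro allI impI conjI ballI)
  fix \<tau> assume tau: "is_tau s m \<alpha> \<beta> cs r \<tau>"
  obtain x where "in_compat_class s \<alpha> \<beta> cs x" "\<forall>i\<in>{1..s}. 0 < x i"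
    using ss by (auto simp: pos_steady_state_def)
  then have C: "Cconst s \<alpha> \<beta> cs j \<noteq> 0" for j by (rule Cconst_nonzero[OF onedim])
  show "phi_well_defined s m \<alpha> \<beta> cs r ell z" if "z \<in> Iset s m \<alpha> \<beta> cs r" for ell z
    unfolding phi_well_defined_def
  proof (rule Ppoly_nonzero[OF C])
    fix k assume "k \<in> Hset s m \<alpha> \<beta> cs r"
    with that have "Ycoord s \<alpha> \<beta> cs k z > 0"
      using Hset_subset_Jset Iset_subset_Iint by (blast intro: Ycoord_pos_if_in_Iint)
    then show "Ycoord s \<alpha> \<beta> cs k z \<noteq> 0 \<or> gam s m \<alpha> \<beta> cs k ell = 0" by simp
  qed
  show Y: "Ycoord s \<alpha> \<beta> cs k (- Bcoef \<alpha> \<beta> cs \<tau> / Acoef \<alpha> \<beta> \<tau>) > 0"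
    if "k \<in> Hset s m \<alpha> \<beta> cs r - {\<tau>}" for k
    using that Ycoord_pos_at_left_endpoint[OF tau lab] by blast
  show "phi_well_defined s m \<alpha> \<beta> cs r ell (- Bcoef \<alpha> \<beta> cs \<tau> / Acoef \<alpha> \<beta> \<tau>)"
    if ell: "is_ell s m \<alpha> \<beta> cs \<tau> ell" for ell
  proof -
    have "gam s m \<alpha> \<beta> cs \<tau> ell = 0"
      using net ell by (intro gam_eq_0_if_minimal) (auto simp: reaction_network_def is_ell_def)
    with Y show ?thesis
      unfolding phi_well_defined_def by (intro Ppoly_nonzero[OF C]) force
  qed
qed

end
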